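(* Let $G=(V,E)$ and $\hat G=(V,\hat E)$ be connected graphs with $\hat E\subseteq E$, let $A\subseteq V$ be nonempty and let $U\subseteq V$. If $\delta(u,v)=\hat\delta(u,v)$ for every pair $(u,v)\in\Big(\bigcup_{a\in A}\hat N_2(a)\Big)\times U$, then $D_a=\hat D_a$ for every $a\in A$.
   Context: $\delta$, $\hat\delta$ are the shortest-path metrics of the unweighted graphs $G$, $\hat G$. For $S\subseteq V$, $\delta(S,v)=\min_{s\in S}\delta(s,v)$ and similarly for $\hat\delta$. $N_2(a)=\{u\in V:\delta(u,a)\le2\}$ and $\hat N_2(a)=\{u\in V:\hat\delta(u,a)\le2\}$. For $w\in V$, $C_A(w)=\{v\in V:\delta(w,v)<\delta(A,v)\}$ and $\hat C_A(w)=\{v\in V:\hat\delta(w,v)<\hat\delta(A,v)\}$. For $a\in A$, $D_a=\Big(\bigcup_{b\in N_2(a)}C_A(b)\cup N_2(a)\Big)\cap U$ and $\hat D_a=\Big(\bigcup_{b\in \hat N_2(a)}\hat C_A(b)\cup \hat N_2(a)\Big)\cap U$. *)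

theory Defs
  imports Main
begin

definition graph :: "'a set \<Rightarrow> ('a \<times> 'a) set \<Rightarrow> bool" where
  "graph V E \<longleftrightarrow> E \<subseteq> V \<times> V \<and> sym E \<and> irrefl E"

definition connected_graph :: "'a set \<Rightarrow> ('a \<times> 'a) set \<Rightarrow> bool" where
  "connected_graph V E \<longleftrightarrow> graph V E \<and> (\<forall>u\<in>V. \<forall>v\<in>V. \<exists>n. (u, v) \<in> E ^^ n)"

definition gdist :: "('a \<times> 'a) set \<Rightarrow> 'a \<Rightarrow> 'a \<Rightarrow> nat" where
  "gdist E u v = (LEAST n. (u, v) \<in> E ^^ n)"

definition setdist :: "('a \<times> 'a) set \<Rightarrow> 'a set \<Rightarrow> 'a \<Rightarrow> nat" where
  "setdist E S v = (INF s\<in>S. gdist E s v)"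

definition N2 :: "'a set \<Rightarrow> ('a \<times> 'a) set \<Rightarrow> 'a \<Rightarrow> 'a set" where
  "N2 V E a = {u \<in> V. gdist E u a \<le> 2}"

definition Cl :: "'a set \<Rightarrow> ('a \<times> 'a) set \<Rightarrow> 'a set \<Rightarrow> 'a \<Rightarrow> 'a set" where
  "Cl V E A w = {v \<in> V. gdist E w v < setdist E A v}"

definition Dset :: "'a set \<Rightarrow> ('a \<times> 'a) set \<Rightarrow> 'a set \<Rightarrow> 'a set \<Rightarrow> 'a \<Rightarrow> 'a set" where
  "Dset V E A U a = ((\<Union>b\<in>N2 V E a. Cl V E A b) \<union> N2 V E a) \<inter> U"

end

theory Submission
  imports Defs
begin

text \<open>The sets \<open>D\<^sub>a\<close> depend only on distances measured from \<open>a\<close> and from \<open>A\<close>: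
  a vertex \<open>v\<close> lies in \<open>(\<Union>b\<in>N\<^sub>2(a). C\<^sub>A(b)) \<union> N\<^sub>2(a)\<close> iff
  \<open>\<delta>(a,v) \<le> 2\<close> or \<open>\<delta>(a,v) < \<delta>(A,v) + 2\<close>. One direction is the triangle inequality
  through \<open>b\<close>; for the other, the vertex two steps along a shortest walk from \<open>a\<close> to \<open>v\<close>
  witnesses membership. Since \<open>a \<in> \<hat>N\<^sub>2(a)\<close> and \<open>A \<subseteq> \<Union>a\<in>A. \<hat>N\<^sub>2(a)\<close>, the hypothesis makes
  all these distances agree in \<open>G\<close> and \<open>\<hat>G\<close> for \<open>v \<in> U\<close>.\<close>

lemma relpow_sym: "sym R \<Longrightarrow> (x, y) \<in> R ^^ n \<Longrightarrow> (y, x) \<in> R ^^ n"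
proof (induction n arbitrary: y)
  case 0
  then show ?case by (auto elim: relpow_0_E intro: relpow_0_I)
next
  case (Suc n)
  from Suc.prems(2) obtain z where "(x, z) \<in> R ^^ n" "(z, y) \<in> R" by (rule relpow_Suc_E)
  with Suc show ?case by (meson relpow_Suc_I2 symD)
qed

lemma relpow_closed: "R \<subseteq> V \<times> V \<Longrightarrow> (x, y) \<in> R ^^ n \<Longrightarrow> x \<in> V \<Longrightarrow> y \<in> V"
proof (induction n arbitrary: y)
  case 0
  then show ?case by (auto elim: relpow_0_E)
next
  case (Suc n)
  from Suc.prems(2) obtain z where "(x, z) \<in> R ^^ n" "(z, y) \<in> R" by (rule relpow_Suc_E)
  with Suc show ?case by blast
qed

lemma gdist_le: "(u, v) \<in> E ^^ n \<Longrightarrow> gdist E u v \<le> n"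
  unfolding gdist_def by (rule Least_le)

lemma gdist_self [simp]: "gdist E a a = 0"
  by (meson gdist_le relpow_0_I le_zero_eq)

lemma gdist_walk: "connected_graph V E \<Longrightarrow> u \<in> V \<Longrightarrow> v \<in> V \<Longrightarrow> (u, v) \<in> E ^^ gdist E u v"
  unfolding gdist_def connected_graph_def by (meson LeastI)

lemma gdist_commute:
  assumes "connected_graph V E" "u \<in> V" "v \<in> V"
  shows "gdist E u v = gdist E v u"
proof -
  have "sym E" using assms(1) unfolding connected_graph_def graph_def by auto
  then have "gdist E v u \<le> gdist E u v" "gdist E u v \<le> gdist E v u"
    using gdist_walk[OF assms] gdist_walk[OF assms(1,3,2)] by (meson gdist_le relpow_sym)+
  then show ?thesis by simp
qed

lemma gdist_triangle: "connected_graph V E \<Longrightarrow> u \<in> V \<Longrightarrow> v \<in> V \<Longrightarrow> w \<in> V \<Longrightarrow>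
    gdist E u w \<le> gdist E u v + gdist E v w"
  by (meson gdist_le gdist_walk relpow_trans)

lemma self_in_N2: "a \<in> V \<Longrightarrow> a \<in> N2 V E a"
  by (simp add: N2_def)

lemma mem_N2_iff: "connected_graph V E \<Longrightarrow> a \<in> V \<Longrightarrow> v \<in> N2 V E a \<longleftrightarrow> v \<in> V \<and> gdist E a v \<le> 2"
  unfolding N2_def using gdist_commute by fastforce

lemma gdist_split_N2:
  assumes conn: "connected_graph V E" and "a \<in> V" "v \<in> V" "2 \<le> gdist E a v"
  obtains b where "b \<in> N2 V E a" "gdist E b v \<le> gdist E a v - 2"
proof -
  have EV: "E \<subseteq> V \<times> V" and "sym E" using conn unfolding connected_graph_def graph_def by auto
  have "(a, v) \<in> E ^^ 2 O E ^^ (gdist E a v - 2)"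
    using gdist_walk[OF conn \<open>a \<in> V\<close> \<open>v \<in> V\<close>] \<open>2 \<le> gdist E a v\<close>
    by (metis le_add_diff_inverse relpow_add)
  then obtain b where ab: "(a, b) \<in> E ^^ 2" and bv: "(b, v) \<in> E ^^ (gdist E a v - 2)"
    by blast
  have "b \<in> N2 V E a"
    using relpow_closed[OF EV ab \<open>a \<in> V\<close>] gdist_le[OF relpow_sym[OF \<open>sym E\<close> ab]]
    by (simp add: N2_def)
  then show thesis using gdist_le[OF bv] by (rule that)
qed

lemma mem_Cl_N2_iff:
  assumes conn: "connected_graph V E" and "a \<in> V" "v \<in> V"
  shows "v \<in> (\<Union>b\<in>N2 V E a. Cl V E A b) \<union> N2 V E a \<longleftrightarrow>
    gdist E a v \<le> 2 \<or> gdist E a v < setdist E A v + 2"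
proof
  assume "v \<in> (\<Union>b\<in>N2 V E a. Cl V E A b) \<union> N2 V E a"
  then consider "v \<in> N2 V E a" | b where "b \<in> N2 V E a" "v \<in> Cl V E A b" by blast
  then show "gdist E a v \<le> 2 \<or> gdist E a v < setdist E A v + 2"
  proof cases
    case 1
    then show ?thesis using mem_N2_iff[OF conn \<open>a \<in> V\<close>] by blast
  next
    case 2
    then have "b \<in> V" "gdist E a b \<le> 2" "gdist E b v < setdist E A v"
      using mem_N2_iff[OF conn \<open>a \<in> V\<close>] by (auto simp: Cl_def)
    then show ?thesis using gdist_triangle[OF conn \<open>a \<in> V\<close> _ \<open>v \<in> V\<close>, of b] by linarith
  qed
next
  assume "gdist E a v \<le> 2 \<or> gdist E a v < setdist E A v + 2"
  then show "v \<in> (\<Union>b\<in>N2 V E a. Cl V E A b) \<union> N2 V E a"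
  proof
    assume "gdist E a v \<le> 2"
    then show ?thesis using mem_N2_iff[OF conn \<open>a \<in> V\<close>] \<open>v \<in> V\<close> by blast
  next
    assume close: "gdist E a v < setdist E A v + 2"
    show ?thesis
    proof (cases "2 \<le> gdist E a v")
      case True
      then obtain b where "b \<in> N2 V E a" "gdist E b v \<le> gdist E a v - 2"
        using gdist_split_N2[OF conn \<open>a \<in> V\<close> \<open>v \<in> V\<close>] by blast
      moreover from this(2) close True have "gdist E b v < setdist E A v" by linarith
      ultimately show ?thesis using \<open>v \<in> V\<close> unfolding Cl_def by blast
    next
      case False
      then show ?thesis using mem_N2_iff[OF conn \<open>a \<in> V\<close>] \<open>v \<in> V\<close> by simp
    qed
  qed
qed

lemma Dset_eq_gdist:
  assumes "connected_graph V E" "a \<in> V" "U \<subseteq> V"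
  shows "Dset V E A U a = {v \<in> U. gdist E a v \<le> 2 \<or> gdist E a v < setdist E A v + 2}"
  using mem_Cl_N2_iff[OF assms(1,2)] assms(3) unfolding Dset_def by blast

theorem lemma7:
  fixes V :: "'a set" and E Eh :: "('a \<times> 'a) set" and A U :: "'a set"
  assumes "connected_graph V E"
    and "connected_graph V Eh"
    and "Eh \<subseteq> E"
    and "A \<subseteq> V" and "A \<noteq> {}"
    and "U \<subseteq> V"
    and "\<forall>u \<in> (\<Union>a\<in>A. N2 V Eh a). \<forall>v \<in> U. gdist E u v = gdist Eh u v"
  shows "\<forall>a\<in>A. Dset V E A U a = Dset V Eh A U a"
proof
  fix a assume "a \<in> A"
  then have "a \<in> V" using assms(4) by blast
  have dist_eq: "gdist E x v = gdist Eh x v" if "x \<in> A" "v \<in> U" for x v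
  proof -
    have "x \<in> N2 V Eh x" using that(1) assms(4) by (intro self_in_N2) blast
    with \<open>x \<in> A\<close> have "x \<in> (\<Union>a\<in>A. N2 V Eh a)" by blast
    with assms(7) \<open>v \<in> U\<close> show ?thesis by blast
  qed
  have "setdist E A v = setdist Eh A v" if "v \<in> U" for v
    unfolding setdist_def using dist_eq[OF _ that] by (simp cong: image_cong)
  with dist_eq[OF \<open>a \<in> A\<close>] show "Dset V E A U a = Dset V Eh A U a"
    unfolding Dset_eq_gdist[OF assms(1) \<open>a \<in> V\<close> assms(6)]
      Dset_eq_gdist[OF assms(2) \<open>a \<in> V\<close> assms(6)]
    by (intro Collect_cong) auto
qed

end
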